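(* For $n\in\mathbb{N}$, let $K_n^0$ be the complete graph on $\{0,1,\dots,n\}$ rooted at $0$. Then $\mathrm{PPF}_n=\mathrm{PPF}(K_n^0)$. Consequently $|\mathrm{PPF}(K_n^0)|=|\mathrm{SR}(K_n^0)|=(n-1)^{n-1}$.
   Context: $[n]=\{1,\dots,n\}$. A classical parking function of size $n$ is $p=(p_1,\dots,p_n)\in[n]^n$ with $|\{j: p_j\le i\}|\ge i$ for all $i\in[n]$; $\mathrm{PF}_n$ is their set. $p\in\mathrm{PF}_n$ has a breakpoint at $j\in[n]$ if $|\{i\in[n]:p_i\le j\}|=j$; $p$ is prime if its only breakpoint is $j=n$; $\mathrm{PPF}_n$ is the set of prime parking functions of size $n$. Functions on $[n]$ are identified with tuples. For a rooted graph $G=(\Gamma,s)$ (finite, undirected, loopless multigraph with sink $s$), $V$ is the vertex set, $\tilde V=V\setminus\{s\}$, $\mathrm{mult}(vw)$ the number of edges between $v,w$, $\deg^A(v)=\sum_{w\in A}\mathrm{mult}(vw)$, $\deg(v)=\deg^V(v)$. A $G$-parking function is $p:\tilde V\to\{1,2,\dots\}$ such that every nonempty $S\subseteq\tilde V$ contains $v$ with $p(v)\le\deg^{V\setminus S}(v)$. With $G^A$ the induced subgraph on $A\cup\{s\}$ rooted at $s$, $p$ is decomposable w.r.t. an ordered partition $(A,B)$ of $\tilde V$ into nonempty blocks if $p|_A$ is a $G^A$-parking function and $v\mapsto p(v)-\deg^A(v)$ on $B$ is a $G^B$-parking function; $p$ is prime if decomposable w.r.t. no such partition; $\mathrm{PPF}(G)$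 is the set of prime $G$-parking functions. A configuration $c:\tilde V\to\mathbb{Z}$ is stable if $c(v)<\deg(v)$ for all $v$; a stable $c$ is recurrent if there is no nonempty $F\subseteq\tilde V$ with $c(v)<\deg^F(v)$ for all $v\in F$; with $V_M(c)=\{v: c(v)\ge\deg(v)-\mathrm{mult}(vs)\}$ and $c^{v-}=c-\sum_{w\ne v}\mathrm{mult}(ws)\mathbf 1_w$, a recurrent $c$ is strongly recurrent if $c^{v-}$ is recurrent for all $v\in V_M(c)$; $\mathrm{SR}(G)$ is their set. *)

theory Defs
  imports "HOL-Library.FuncSet"
begin

definition PF :: "nat \<Rightarrow> (nat \<Rightarrow> int) set" where
  "PF n = {p \<in> {1..n} \<rightarrow>\<^sub>E {1..int n}.
             \<forall>i\<in>{1..n}. card {j\<in>{1..n}. p j \<le> int i} \<ge> i}"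

definition breakpoint :: "nat \<Rightarrow> (nat \<Rightarrow> int) \<Rightarrow> nat \<Rightarrow> bool" where
  "breakpoint n p j \<longleftrightarrow> j \<in> {1..n} \<and> card {i\<in>{1..n}. p i \<le> int j} = j"

definition PPF :: "nat \<Rightarrow> (nat \<Rightarrow> int) set" where
  "PPF n = {p \<in> PF n. \<forall>j. breakpoint n p j \<longrightarrow> j = n}"

text \<open>A rooted multigraph is given by a finite vertex set V, a symmetric
  multiplicity function mult (with mult v v = 0) and a sink s in V.
  The reduced vertex set is V - {s}.\<close>

definition deg_on :: "('a \<Rightarrow> 'a \<Rightarrow> nat) \<Rightarrow> 'a set \<Rightarrow> 'a \<Rightarrow> nat" where
  "deg_on mult A v = (\<Sum>w\<in>A. mult v w)"

definition is_gpf :: "'a set \<Rightarrow> ('a \<Rightarrow> 'a \<Rightarrow> nat) \<Rightarrow> 'a \<Rightarrow> ('a \<Rightarrow> int) \<Rightarrow> bool" where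
  "is_gpf V mult s p \<longleftrightarrow>
     p \<in> extensional (V - {s}) \<and> (\<forall>v\<in>V - {s}. p v \<ge> 1) \<and>
     (\<forall>S. S \<subseteq> V - {s} \<and> S \<noteq> {} \<longrightarrow> (\<exists>v\<in>S. p v \<le> int (deg_on mult (V - S) v)))"

text \<open>Induced subgraph G^A on A \<union> {s}: same multiplicity function, vertex set A \<union> {s}.\<close>

definition decomposable ::
  "'a set \<Rightarrow> ('a \<Rightarrow> 'a \<Rightarrow> nat) \<Rightarrow> 'a \<Rightarrow> ('a \<Rightarrow> int) \<Rightarrow> 'a set \<Rightarrow> 'a set \<Rightarrow> bool" where
  "decomposable V mult s p A B \<longleftrightarrow>
     A \<noteq> {} \<and> B \<noteq> {} \<and> A \<union> B = V - {s} \<and> A \<inter> B = {} \<and>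
     is_gpf (A \<union> {s}) mult s (restrict p A) \<and>
     is_gpf (B \<union> {s}) mult s (\<lambda>v\<in>B. p v - int (deg_on mult A v))"

definition PPF_G :: "'a set \<Rightarrow> ('a \<Rightarrow> 'a \<Rightarrow> nat) \<Rightarrow> 'a \<Rightarrow> ('a \<Rightarrow> int) set" where
  "PPF_G V mult s = {p. is_gpf V mult s p \<and> \<not> (\<exists>A B. decomposable V mult s p A B)}"

definition stable :: "'a set \<Rightarrow> ('a \<Rightarrow> 'a \<Rightarrow> nat) \<Rightarrow> 'a \<Rightarrow> ('a \<Rightarrow> int) \<Rightarrow> bool" where
  "stable V mult s c \<longleftrightarrow> (\<forall>v\<in>V - {s}. c v < int (deg_on mult V v))"

definition recurrent :: "'a set \<Rightarrow> ('a \<Rightarrow> 'a \<Rightarrow> nat) \<Rightarrow> 'a \<Rightarrow> ('a \<Rightarrow> int) \<Rightarrow> bool" where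
  "recurrent V mult s c \<longleftrightarrow> stable V mult s c \<and>
     \<not> (\<exists>F. F \<subseteq> V - {s} \<and> F \<noteq> {} \<and> (\<forall>v\<in>F. c v < int (deg_on mult F v)))"

definition VM :: "'a set \<Rightarrow> ('a \<Rightarrow> 'a \<Rightarrow> nat) \<Rightarrow> 'a \<Rightarrow> ('a \<Rightarrow> int) \<Rightarrow> 'a set" where
  "VM V mult s c = {v\<in>V - {s}. c v \<ge> int (deg_on mult V v) - int (mult v s)}"

definition cminus :: "'a set \<Rightarrow> ('a \<Rightarrow> 'a \<Rightarrow> nat) \<Rightarrow> 'a \<Rightarrow> ('a \<Rightarrow> int) \<Rightarrow> 'a \<Rightarrow> ('a \<Rightarrow> int)" where
  "cminus V mult s c v = (\<lambda>w\<in>V - {s}. if w \<noteq> v then c w - int (mult w s) else c w)"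

definition strongly_recurrent :: "'a set \<Rightarrow> ('a \<Rightarrow> 'a \<Rightarrow> nat) \<Rightarrow> 'a \<Rightarrow> ('a \<Rightarrow> int) \<Rightarrow> bool" where
  "strongly_recurrent V mult s c \<longleftrightarrow> recurrent V mult s c \<and>
     (\<forall>v\<in>VM V mult s c. recurrent V mult s (cminus V mult s c v))"

definition SR :: "'a set \<Rightarrow> ('a \<Rightarrow> 'a \<Rightarrow> nat) \<Rightarrow> 'a \<Rightarrow> ('a \<Rightarrow> int) set" where
  "SR V mult s = {c. c \<in> extensional (V - {s}) \<and> strongly_recurrent V mult s c}"

definition K_mult :: "nat \<Rightarrow> nat \<Rightarrow> nat" where
  "K_mult v w = (if v \<noteq> w then 1 else 0)"

end

theory Submission
  imports Defs
begin

text \<open>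
  Configurations c and functions p on the non-sink vertices correspond via p = deg - c. Under this
  duality the recurrent configurations are exactly the G-parking functions, and the strongly
  recurrent ones are the G-parking functions p such that, for each v with p(v) <= mult(v, s),
  adding mult(w, s) at every w other than v again gives a G-parking function.

  On K_n^0 a G-parking function on A + {0} is a classical parking function on A, and a
  decomposition (A, B) is the same as a breakpoint |A| < n. A parking function always takes the
  value 1 somewhere, and raising all other values by one keeps it parking iff it has no breakpoint
  before n; so both PPF(K_n^0) and the dual of SR(K_n^0) are PPF_n.

  For the count we follow Pollak: of the m = n - 1 cyclic shifts of the values of a function
  [n] -> [m], exactly one is a prime parking function, hence |PPF_n| * m = m^n.
\<close>

section \<open>Recurrent configurations and G-parking functions\<close>

lemma deg_on_split:
  assumes "finite V" "F \<subseteq> V"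
  shows "deg_on mult V v = deg_on mult F v + deg_on mult (V - F) v"
  unfolding deg_on_def using sum.subset_diff[OF assms(2,1)] by (simp add: add.commute)

definition dual_config :: "'a set \<Rightarrow> ('a \<Rightarrow> 'a \<Rightarrow> nat) \<Rightarrow> 'a \<Rightarrow> ('a \<Rightarrow> int) \<Rightarrow> ('a \<Rightarrow> int)" where
  "dual_config V mult s c = (\<lambda>v\<in>V - {s}. int (deg_on mult V v) - c v)"

lemma dual_config_dual_config:
  "c \<in> extensional (V - {s}) \<Longrightarrow> dual_config V mult s (dual_config V mult s c) = c"
  unfolding dual_config_def by (rule extensionalityI[of _ "V - {s}"]) auto

lemma recurrent_iff_is_gpf_dual_config:
  assumes "finite V"
  shows "recurrent V mult s c \<longleftrightarrow> is_gpf V mult s (dual_config V mult s c)"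
proof -
  let ?p = "dual_config V mult s c"
  have stable: "stable V mult s c \<longleftrightarrow> (\<forall>v\<in>V - {s}. ?p v \<ge> 1)"
    unfolding stable_def dual_config_def by (intro ball_cong) auto
  have pointwise: "c v < int (deg_on mult F v) \<longleftrightarrow>
        \<not> ?p v \<le> int (deg_on mult (V - F) v)"
    if "F \<subseteq> V - {s}" "v \<in> F" for F v
  proof -
    have "deg_on mult V v = deg_on mult F v + deg_on mult (V - F) v"
      using that by (intro deg_on_split[OF assms]) auto
    with that show ?thesis by (auto simp: dual_config_def)
  qed
  then have "(\<forall>v\<in>F. c v < int (deg_on mult F v)) \<longleftrightarrow>
      \<not> (\<exists>v\<in>F. ?p v \<le> int (deg_on mult (V - F) v))" if "F \<subseteq> V - {s}" for F
    using that by blast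
  then have "(\<exists>F. F \<subseteq> V - {s} \<and> F \<noteq> {} \<and> (\<forall>v\<in>F. c v < int (deg_on mult F v))) \<longleftrightarrow>
      \<not> (\<forall>S. S \<subseteq> V - {s} \<and> S \<noteq> {} \<longrightarrow> (\<exists>v\<in>S. ?p v \<le> int (deg_on mult (V - S) v)))"
    by blast
  moreover have "?p \<in> extensional (V - {s})"
    by (simp add: dual_config_def)
  ultimately show ?thesis
    unfolding recurrent_def is_gpf_def stable by blast
qed

definition cplus :: "'a set \<Rightarrow> ('a \<Rightarrow> 'a \<Rightarrow> nat) \<Rightarrow> 'a \<Rightarrow> ('a \<Rightarrow> int) \<Rightarrow> 'a \<Rightarrow> ('a \<Rightarrow> int)" where
  "cplus V mult s p v = (\<lambda>w\<in>V - {s}. if w \<noteq> v then p w + int (mult w s) else p w)"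

lemma dual_config_cminus:
  "dual_config V mult s (cminus V mult s c v) = cplus V mult s (dual_config V mult s c) v"
  unfolding dual_config_def cminus_def cplus_def by auto

lemma VM_iff_dual_config:
  "v \<in> VM V mult s c \<longleftrightarrow> v \<in> V - {s} \<and> dual_config V mult s c v \<le> int (mult v s)"
  unfolding VM_def dual_config_def by auto

definition strong_gpf :: "'a set \<Rightarrow> ('a \<Rightarrow> 'a \<Rightarrow> nat) \<Rightarrow> 'a \<Rightarrow> ('a \<Rightarrow> int) \<Rightarrow> bool" where
  "strong_gpf V mult s p \<longleftrightarrow> is_gpf V mult s p \<and>
     (\<forall>v\<in>V - {s}. p v \<le> int (mult v s) \<longrightarrow> is_gpf V mult s (cplus V mult s p v))"

lemma strongly_recurrent_iff_strong_gpf_dual_config: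
  assumes "finite V"
  shows "strongly_recurrent V mult s c \<longleftrightarrow> strong_gpf V mult s (dual_config V mult s c)"
  unfolding strongly_recurrent_def strong_gpf_def
  by (auto simp: recurrent_iff_is_gpf_dual_config[OF assms] dual_config_cminus VM_iff_dual_config)

lemma bij_betw_SR_strong_gpf:
  assumes "finite V"
  shows "bij_betw (dual_config V mult s) (SR V mult s) {p. strong_gpf V mult s p}"
proof (rule bij_betw_byWitness[where f' = "dual_config V mult s"])
  have ext: "p \<in> extensional (V - {s})" if "strong_gpf V mult s p" for p
    using that unfolding strong_gpf_def is_gpf_def by blast
  show "\<forall>c\<in>SR V mult s. dual_config V mult s (dual_config V mult s c) = c"
    by (simp add: SR_def dual_config_dual_config)
  show "\<forall>p\<in>{p. strong_gpf V mult s p}. dual_config V mult s (dual_config V mult s p) = p"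
    using ext by (simp add: dual_config_dual_config)
  show "dual_config V mult s ` SR V mult s \<subseteq> {p. strong_gpf V mult s p}"
    by (auto simp: SR_def strongly_recurrent_iff_strong_gpf_dual_config[OF assms])
  show "dual_config V mult s ` {p. strong_gpf V mult s p} \<subseteq> SR V mult s"
  proof
    fix c assume "c \<in> dual_config V mult s ` {p. strong_gpf V mult s p}"
    then obtain p where p: "strong_gpf V mult s p" "c = dual_config V mult s p" by blast
    then have "strong_gpf V mult s (dual_config V mult s c)"
      using ext dual_config_dual_config by metis
    then show "c \<in> SR V mult s"
      unfolding SR_def strongly_recurrent_iff_strong_gpf_dual_config[OF assms]
      using p(2) by (simp add: dual_config_def)
  qed
qed

section \<open>Parking functions on the complete graph\<close>

lemma atLeast0AtMost_remove0: "{0..n} - {0} = {1..n::nat}"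
  by auto

definition count_le :: "'a set \<Rightarrow> ('a \<Rightarrow> int) \<Rightarrow> nat \<Rightarrow> nat" where
  "count_le A p i = card {j\<in>A. p j \<le> int i}"

definition parking_on :: "'a set \<Rightarrow> ('a \<Rightarrow> int) \<Rightarrow> bool" where
  "parking_on A p \<longleftrightarrow> p \<in> extensional A \<and> (\<forall>v\<in>A. 1 \<le> p v) \<and>
     (\<forall>i\<in>{1..card A}. i \<le> count_le A p i)"

lemma count_le_mono: "finite A \<Longrightarrow> i \<le> i' \<Longrightarrow> count_le A p i \<le> count_le A p i'"
  unfolding count_le_def by (intro card_mono) auto

lemma count_le_le_card: "finite A \<Longrightarrow> count_le A p i \<le> card A"
  unfolding count_le_def by (intro card_mono) auto

lemma parking_on_le_card:
  assumes "finite A" "parking_on A p" "v \<in> A"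
  shows "p v \<le> int (card A)"
proof -
  have "card A \<le> count_le A p (card A)"
    using assms unfolding parking_on_def by force
  then have "{j\<in>A. p j \<le> int (card A)} = A"
    unfolding count_le_def using assms(1) by (intro card_seteq) auto
  with assms(3) show ?thesis by blast
qed

lemma subset_condition_iff_count_le:
  assumes "finite A"
  shows "(\<forall>S. S \<subseteq> A \<and> S \<noteq> {} \<longrightarrow> (\<exists>v\<in>S. p v \<le> int (card A + 1 - card S)))
     \<longleftrightarrow> (\<forall>i\<in>{1..card A}. i \<le> count_le A p i)"
proof
  assume H: "\<forall>S. S \<subseteq> A \<and> S \<noteq> {} \<longrightarrow> (\<exists>v\<in>S. p v \<le> int (card A + 1 - card S))"
  show "\<forall>i\<in>{1..card A}. i \<le> count_le A p i"
  proof
    fix i assume i: "i \<in> {1..card A}"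
    define S where "S = {j\<in>A. int i < p j}"
    have "S \<subseteq> A" unfolding S_def by auto
    have count: "count_le A p i = card A - card S"
    proof -
      have "{j\<in>A. p j \<le> int i} = A - S" unfolding S_def by auto
      with \<open>S \<subseteq> A\<close> assms show ?thesis
        unfolding count_le_def by (simp add: card_Diff_subset finite_subset)
    qed
    show "i \<le> count_le A p i"
    proof (cases "S = {}")
      case False
      then obtain v where "v \<in> S" "p v \<le> int (card A + 1 - card S)"
        using H \<open>S \<subseteq> A\<close> by blast
      moreover have "card S \<le> card A" using \<open>S \<subseteq> A\<close> assms by (rule card_mono[rotated])
      ultimately have "card S \<le> card A - i" unfolding S_def by auto
      with count i show ?thesis by auto
    qed (use count i in auto)
  qed
next
  assume H: "\<forall>i\<in>{1..card A}. i \<le> count_le A p i"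
  show "\<forall>S. S \<subseteq> A \<and> S \<noteq> {} \<longrightarrow> (\<exists>v\<in>S. p v \<le> int (card A + 1 - card S))"
  proof (intro allI impI; rule ccontr)
    fix S assume S: "S \<subseteq> A \<and> S \<noteq> {}" and "\<not> (\<exists>v\<in>S. p v \<le> int (card A + 1 - card S))"
    then have large: "\<forall>v\<in>S. int (card A + 1 - card S) < p v" by auto
    define i where "i = card A + 1 - card S"
    have "finite S" using S assms finite_subset by blast
    with S have "1 \<le> card S" "card S \<le> card A"
      using assms by (auto simp: Suc_le_eq card_gt_0_iff card_mono)
    then have i: "i \<in> {1..card A}" unfolding i_def by auto
    have "{j\<in>A. p j \<le> int i} \<subseteq> A - S" using large unfolding i_def by auto
    then have "count_le A p i \<le> card A - card S"
      unfolding count_le_def using S assms \<open>finite S\<close>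
      by (metis (no_types, lifting) card_Diff_subset card_mono finite_Diff)
    with H i \<open>1 \<le> card S\<close> show False unfolding i_def by fastforce
  qed
qed

lemma deg_on_K_mult:
  assumes "finite X"
  shows "deg_on K_mult X v = card (X - {v})"
proof -
  have "deg_on K_mult X v = (\<Sum>w\<in>X. if w \<in> X - {v} then 1 else 0)"
    unfolding deg_on_def K_mult_def by (intro sum.cong) auto
  also have "\<dots> = card (X - {v})"
    using assms by (simp add: sum.If_cases Int_absorb1 Diff_eq Compl_eq)
  finally show ?thesis .
qed

lemma is_gpf_K_mult_iff:
  assumes "finite A" "s \<notin> A"
  shows "is_gpf (A \<union> {s}) K_mult s p \<longleftrightarrow> parking_on A p"
proof -
  have deg: "deg_on K_mult (A \<union> {s} - S) v = card A + 1 - card S" if "S \<subseteq> A" "v \<in> S" for S v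
  proof -
    have "A \<union> {s} - S = insert s (A - S)" "v \<notin> insert s (A - S)"
      using that assms(2) by auto
    then have "deg_on K_mult (A \<union> {s} - S) v = card (insert s (A - S))"
      using that assms by (simp add: deg_on_K_mult)
    also have "\<dots> = card A + 1 - card S"
      using that assms by (simp add: card_Diff_subset finite_subset card_mono Suc_diff_le)
    finally show ?thesis .
  qed
  then have "(\<exists>v\<in>S. p v \<le> int (deg_on K_mult (A \<union> {s} - S) v)) \<longleftrightarrow>
      (\<exists>v\<in>S. p v \<le> int (card A + 1 - card S))" if "S \<subseteq> A" for S
    using that by auto
  moreover have "A \<union> {s} - {s} = A" using assms(2) by auto
  ultimately show ?thesis
    unfolding is_gpf_def parking_on_def subset_condition_iff_count_le[OF assms(1), symmetric]
    by (simp cong: conj_cong imp_cong)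
qed

lemma PF_eq_parking_on: "PF n = {p. parking_on {1..n} p}"
proof -
  have "p \<in> {1..n} \<rightarrow>\<^sub>E {1..int n}" if "parking_on {1..n} p" for p
    using that parking_on_le_card[OF _ that] unfolding parking_on_def by (auto simp: PiE_iff)
  then show ?thesis
    unfolding PF_def parking_on_def count_le_def by (auto simp: PiE_iff)
qed

lemma is_gpf_K_mult_iff_PF: "is_gpf {0..n} K_mult 0 p \<longleftrightarrow> p \<in> PF n"
proof -
  have "{0..n} = {1..n} \<union> {0::nat}" by auto
  then show ?thesis
    using is_gpf_K_mult_iff[of "{1..n}" 0 p] by (simp add: PF_eq_parking_on)
qed

lemma breakpoint_iff_count_le: "breakpoint n p j \<longleftrightarrow> j \<in> {1..n} \<and> count_le {1..n} p j = j"
  unfolding breakpoint_def count_le_def ..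

lemma decomposable_K_mult_imp_breakpoint:
  assumes "decomposable {0..n} K_mult 0 p A B"
  shows "breakpoint n p (card A) \<and> card A < n"
proof -
  have AB: "A \<noteq> {}" "B \<noteq> {}" "A \<union> B = {1..n}" "A \<inter> B = {}"
    and gpf_A: "is_gpf (A \<union> {0}) K_mult 0 (restrict p A)"
    and gpf_B: "is_gpf (B \<union> {0}) K_mult 0 (\<lambda>v\<in>B. p v - int (deg_on K_mult A v))"
    using assms unfolding decomposable_def atLeast0AtMost_remove0 by blast+
  have "A \<subseteq> {1..n}" "B \<subseteq> {1..n}" using AB(3) by blast+
  then have fin: "finite A" "finite B" "0 \<notin> A" "0 \<notin> B"
    by (auto intro: finite_subset)
  have "p v \<le> int (card A)" if "v \<in> A" for v
    using parking_on_le_card[OF fin(1) gpf_A[unfolded is_gpf_K_mult_iff[OF fin(1,3)]] that] that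
    by simp
  moreover have "int (card A) < p v" if "v \<in> B" for v
  proof -
    have "A - {v} = A" using that AB(4) by blast
    then have "deg_on K_mult A v = card A" using fin(1) by (simp add: deg_on_K_mult)
    then show ?thesis
      using gpf_B[unfolded is_gpf_K_mult_iff[OF fin(2,4)] parking_on_def] that by auto
  qed
  ultimately have "{j\<in>{1..n}. p j \<le> int (card A)} = A" using AB(3,4) by fastforce
  moreover have "card A < n"
    using AB psubset_card_mono[of "{1..n}" A] by auto
  ultimately show ?thesis
    using AB(1) fin(1) unfolding breakpoint_def by (simp add: Suc_le_eq card_gt_0_iff)
qed

lemma breakpoint_imp_decomposable_K_mult:
  assumes "p \<in> PF n" "breakpoint n p j" "j < n"
  defines "A \<equiv> {i\<in>{1..n}. p i \<le> int j}" and "B \<equiv> {i\<in>{1..n}. int j < p i}"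
  shows "decomposable {0..n} K_mult 0 p A B"
proof -
  have parking: "parking_on {1..n} p" using assms(1) by (simp add: PF_eq_parking_on)
  have fin: "finite A" "finite B" "0 \<notin> A" "0 \<notin> B" unfolding A_def B_def by auto
  have card_A: "card A = j" using assms(2) unfolding A_def breakpoint_def by simp
  have partition: "A \<union> B = {1..n}" "A \<inter> B = {}" unfolding A_def B_def by auto
  then have "card A + card B = n" using fin by (metis card_Un_disjoint card_atLeastAtMost diff_Suc_1)
  then have card_B: "card B = n - j" using card_A by linarith
  have "restrict p A \<in> extensional A" "\<forall>v\<in>A. 1 \<le> restrict p A v"
    using parking unfolding parking_on_def A_def by auto
  moreover have "i \<le> count_le A (restrict p A) i" if "i \<in> {1..card A}" for i
  proof -
    have "{x\<in>A. restrict p A x \<le> int i} = {x\<in>{1..n}. p x \<le> int i}"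
      using that card_A unfolding A_def by auto
    then show ?thesis
      using parking that card_A assms(3) unfolding parking_on_def count_le_def by auto
  qed
  ultimately have gpf_A: "is_gpf (A \<union> {0}) K_mult 0 (restrict p A)"
    unfolding is_gpf_K_mult_iff[OF fin(1,3)] parking_on_def by blast
  define q where "q = (\<lambda>v\<in>B. p v - int (deg_on K_mult A v))"
  have q: "q v = p v - int j" if "v \<in> B" for v
  proof -
    have "A - {v} = A" using that partition(2) by blast
    then show ?thesis using that fin(1) card_A by (simp add: q_def deg_on_K_mult)
  qed
  have "q \<in> extensional B" "\<forall>v\<in>B. 1 \<le> q v"
    using q unfolding q_def B_def by auto
  moreover have "i \<le> count_le B q i" if "i \<in> {1..card B}" for i
  proof -
    have "{x\<in>B. q x \<le> int i} = {x\<in>{1..n}. p x \<le> int (i + j)} - A"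
      using q unfolding A_def B_def by auto
    moreover have "A \<subseteq> {x\<in>{1..n}. p x \<le> int (i + j)}" unfolding A_def by auto
    ultimately have "count_le B q i = count_le {1..n} p (i + j) - j"
      unfolding count_le_def using card_A fin(1) by (simp add: card_Diff_subset)
    moreover have "i + j \<le> count_le {1..n} p (i + j)"
      using parking that card_B assms(3) unfolding parking_on_def by auto
    ultimately show ?thesis by linarith
  qed
  ultimately have gpf_B: "is_gpf (B \<union> {0}) K_mult 0 q"
    unfolding is_gpf_K_mult_iff[OF fin(2,4)] parking_on_def by blast
  have "A \<noteq> {}" "B \<noteq> {}"
    using card_A card_B assms(2,3) unfolding breakpoint_def by auto
  then show ?thesis
    unfolding decomposable_def q_def[symmetric] atLeast0AtMost_remove0
    using partition gpf_A gpf_B by simp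
qed

lemma PPF_iff_no_early_breakpoint: "p \<in> PPF n \<longleftrightarrow> p \<in> PF n \<and> (\<forall>j<n. \<not> breakpoint n p j)"
  unfolding PPF_def breakpoint_def by (auto simp: le_less)

lemma PPF_eq_PPF_G: "PPF n = PPF_G {0..n} K_mult 0"
proof -
  have "(\<exists>A B. decomposable {0..n} K_mult 0 p A B) \<longleftrightarrow> (\<exists>j. breakpoint n p j \<and> j < n)"
    if "p \<in> PF n" for p
    using that breakpoint_imp_decomposable_K_mult decomposable_K_mult_imp_breakpoint by blast
  then have "p \<in> PPF n \<longleftrightarrow> p \<in> PPF_G {0..n} K_mult 0" for p
    unfolding PPF_G_def is_gpf_K_mult_iff_PF PPF_iff_no_early_breakpoint by blast
  then show ?thesis by blast
qed

lemma cplus_K_mult_in_PF_iff: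
  assumes "p \<in> PF n" "v \<in> {1..n}" "p v = 1"
  shows "cplus {0..n} K_mult 0 p v \<in> PF n \<longleftrightarrow> (\<forall>j<n. \<not> breakpoint n p j)"
proof -
  define q where "q = cplus {0..n} K_mult 0 p v"
  have parking: "parking_on {1..n} p" using assms(1) by (simp add: PF_eq_parking_on)
  have q: "q w = (if w \<noteq> v then p w + 1 else p w)" if "w \<in> {1..n}" for w
    using that unfolding q_def cplus_def K_mult_def by auto
  have "q \<in> extensional {1..n}" "\<forall>w\<in>{1..n}. 1 \<le> q w"
    using parking q unfolding q_def cplus_def parking_on_def atLeast0AtMost_remove0 by auto
  then have "q \<in> PF n \<longleftrightarrow> (\<forall>i\<in>{1..n}. i \<le> count_le {1..n} q i)"
    by (simp add: PF_eq_parking_on parking_on_def)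
  also have "\<dots> \<longleftrightarrow> (\<forall>i\<in>{1..<n}. Suc i \<le> count_le {1..n} p i)"
  proof -
    have one: "1 \<le> count_le {1..n} q 1"
      using assms(2,3) q[of v] unfolding count_le_def by (auto simp: Suc_le_eq card_gt_0_iff)
    have shifted: "count_le {1..n} q (Suc i) = count_le {1..n} p i" if "1 \<le> i" for i
    proof -
      have "{w\<in>{1..n}. q w \<le> int (Suc i)} = {w\<in>{1..n}. p w \<le> int i}"
        using that q assms(3) by (auto split: if_splits)
      then show ?thesis unfolding count_le_def by simp
    qed
    show ?thesis
    proof (intro iffI ballI)
      fix i assume H: "\<forall>i\<in>{1..n}. i \<le> count_le {1..n} q i" and i: "i \<in> {1..<n}"
      then have "Suc i \<le> count_le {1..n} q (Suc i)" by simp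
      then show "Suc i \<le> count_le {1..n} p i" using shifted[of i] i by simp
    next
      fix i assume H: "\<forall>i\<in>{1..<n}. Suc i \<le> count_le {1..n} p i" and i: "i \<in> {1..n}"
      show "i \<le> count_le {1..n} q i"
      proof (cases "i = 1")
        case False
        then obtain k where "i = Suc k" "1 \<le> k" using i by (cases i) auto
        then show ?thesis using H i shifted[of k] by auto
      qed (use one in simp)
    qed
  qed
  also have "\<dots> \<longleftrightarrow> (\<forall>j<n. \<not> breakpoint n p j)"
  proof -
    have "Suc j \<le> count_le {1..n} p j \<longleftrightarrow> \<not> breakpoint n p j" if "j \<in> {1..<n}" for j
    proof -
      have "j \<le> count_le {1..n} p j" using parking that unfolding parking_on_def by auto
      then show ?thesis using that unfolding breakpoint_iff_count_le by auto
    qed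
    moreover have "\<not> breakpoint n p 0" unfolding breakpoint_def by simp
    ultimately show ?thesis by (metis atLeastLessThan_iff less_one not_le)
  qed
  finally show ?thesis unfolding q_def .
qed

lemma strong_gpf_K_mult_iff_PPF:
  assumes "1 \<le> n"
  shows "strong_gpf {0..n} K_mult 0 p \<longleftrightarrow> p \<in> PPF n"
proof (cases "p \<in> PF n")
  case True
  then have parking: "parking_on {1..n} p" by (simp add: PF_eq_parking_on)
  then have "1 \<le> count_le {1..n} p 1" using assms unfolding parking_on_def by auto
  then obtain v0 where v0: "v0 \<in> {1..n}" "p v0 \<le> 1"
    unfolding count_le_def by (auto simp: Suc_le_eq card_gt_0_iff)
  have one: "p v = 1" if "v \<in> {1..n}" "p v \<le> 1" for v
    using parking that unfolding parking_on_def by force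
  have "strong_gpf {0..n} K_mult 0 p \<longleftrightarrow>
      (\<forall>v\<in>{1..n}. p v \<le> 1 \<longrightarrow> cplus {0..n} K_mult 0 p v \<in> PF n)"
    unfolding strong_gpf_def is_gpf_K_mult_iff_PF atLeast0AtMost_remove0
    using True by (auto simp: K_mult_def)
  also have "\<dots> \<longleftrightarrow> (\<forall>j<n. \<not> breakpoint n p j)"
    using cplus_K_mult_in_PF_iff[OF True] one v0 by blast
  finally show ?thesis using True PPF_iff_no_early_breakpoint by blast
next
  case False
  then show ?thesis
    unfolding strong_gpf_def is_gpf_K_mult_iff_PF PPF_iff_no_early_breakpoint by blast
qed

lemma card_SR_K_mult: "1 \<le> n \<Longrightarrow> card (SR {0..n} K_mult 0) = card (PPF n)"
  using bij_betw_same_card[OF bij_betw_SR_strong_gpf[of "{0..n}" K_mult 0]]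
  by (simp add: strong_gpf_K_mult_iff_PPF)

section \<open>Counting prime parking functions\<close>

definition cyclic_shift :: "nat \<Rightarrow> nat \<Rightarrow> nat \<Rightarrow> (nat \<Rightarrow> int) \<Rightarrow> (nat \<Rightarrow> int)" where
  "cyclic_shift n m k p = (\<lambda>j\<in>{1..n}. (p j - 1 + int k) mod int m + 1)"

lemma cyclic_shift_in_PiE:
  assumes "0 < m"
  shows "cyclic_shift n m k p \<in> {1..n} \<rightarrow>\<^sub>E {1..int m}"
proof -
  have "x mod int m + 1 \<in> {1..int m}" for x
  proof -
    have "0 \<le> x mod int m" "x mod int m < int m" using assms by simp_all
    then show ?thesis by simp
  qed
  then show ?thesis unfolding cyclic_shift_def by (auto simp: PiE_iff)
qed

lemma cyclic_shift_0:
  assumes "p \<in> {1..n} \<rightarrow>\<^sub>E {1..int m}"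
  shows "cyclic_shift n m 0 p = p"
proof (rule extensionalityI[of _ "{1..n}"])
  show "cyclic_shift n m 0 p \<in> extensional {1..n}" "p \<in> extensional {1..n}"
    using assms unfolding cyclic_shift_def by (auto simp: PiE_iff)
  show "cyclic_shift n m 0 p j = p j" if "j \<in> {1..n}" for j
  proof -
    have "0 \<le> p j - 1" "p j - 1 < int m" using PiE_mem[OF assms that] by auto
    then show ?thesis using that unfolding cyclic_shift_def by simp
  qed
qed

lemma cyclic_shift_cyclic_shift:
  "cyclic_shift n m a (cyclic_shift n m b p) = cyclic_shift n m (a + b) p"
proof
  fix j
  have "((p j - 1 + int b) mod int m + int a) mod int m = (p j - 1 + int b + int a) mod int m"
    by (rule mod_add_left_eq)
  also have "\<dots> = (p j - 1 + int (a + b)) mod int m"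
    by (simp add: algebra_simps)
  finally have "((p j - 1 + int b) mod int m + int a) mod int m = (p j - 1 + int (a + b)) mod int m" .
  then show "cyclic_shift n m a (cyclic_shift n m b p) j = cyclic_shift n m (a + b) p j"
    unfolding cyclic_shift_def by simp
qed

lemma cyclic_shift_mod: "cyclic_shift n m (k mod m) p = cyclic_shift n m k p"
  unfolding cyclic_shift_def by (auto simp: zmod_int mod_add_right_eq)

lemma cyclic_shift_period:
  assumes "p \<in> {1..n} \<rightarrow>\<^sub>E {1..int m}"
  shows "cyclic_shift n m m p = p"
  using cyclic_shift_mod[of n m m p] cyclic_shift_0[OF assms] by simp

lemma cyclic_shift_le_iff:
  fixes x :: int
  assumes "1 \<le> x" "x \<le> int m" "r \<le> m" "t \<le> m"
  shows "(x - 1 + int (m - r)) mod int m + 1 \<le> int t \<longleftrightarrow>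
    (if r + t \<le> m then int r < x \<and> x \<le> int (r + t) else x \<le> int (r + t) - int m \<or> int r < x)"
proof (cases "x \<le> int r")
  case True
  then have "(x - 1 + int (m - r)) mod int m = x - 1 + int (m - r)"
    using assms by (intro mod_pos_pos_trivial) auto
  then show ?thesis using True assms by auto
next
  case False
  then have "(x - 1 + int (m - r)) mod int m = ((x - 1 - int r) + int m) mod int m"
    using assms by (simp add: algebra_simps)
  also have "\<dots> = x - 1 - int r"
    using False assms by (simp add: mod_pos_pos_trivial)
  finally show ?thesis using False assms by auto
qed

lemma count_le_cyclic_shift:
  assumes f: "f \<in> {1..n} \<rightarrow>\<^sub>E {1..int m}" and "r \<le> m" "t \<le> m"
  shows "count_le {1..n} (cyclic_shift n m (m - r) f) t =
    (if r + t \<le> m then count_le {1..n} f (r + t) - count_le {1..n} f r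
     else count_le {1..n} f (r + t - m) + (n - count_le {1..n} f r))"
proof -
  define F where "F i = {j\<in>{1..n}. f j \<le> int i}" for i
  have F_mono: "F i \<subseteq> F i'" if "i \<le> i'" for i i' using that unfolding F_def by auto
  have count: "count_le {1..n} f i = card (F i)" for i unfolding F_def count_le_def ..
  have shifted: "{j\<in>{1..n}. cyclic_shift n m (m - r) f j \<le> int t} =
    (if r + t \<le> m then F (r + t) - F r else F (r + t - m) \<union> ({1..n} - F r))"
    using cyclic_shift_le_iff[OF _ _ assms(2,3)] PiE_mem[OF f] assms(2,3)
    unfolding F_def cyclic_shift_def by (auto split: if_splits)
  show ?thesis
  proof (cases "r + t \<le> m")
    case True
    then show ?thesis
      using shifted F_mono[of r "r + t"] unfolding count count_le_def
      by (simp add: card_Diff_subset F_def)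
  next
    case False
    have "F (r + t - m) \<subseteq> F r" using assms(3) by (intro F_mono) linarith
    then have "F (r + t - m) \<inter> ({1..n} - F r) = {}" by blast
    moreover have "F r \<subseteq> {1..n}" unfolding F_def by auto
    ultimately show ?thesis
      using shifted False unfolding count count_le_def
      by (simp add: card_Un_disjoint card_Diff_subset F_def)
  qed
qed

lemma PPF_Suc_iff:
  assumes "1 \<le> m"
  shows "p \<in> PPF (Suc m) \<longleftrightarrow>
    p \<in> {1..Suc m} \<rightarrow>\<^sub>E {1..int m} \<and> (\<forall>t\<in>{1..m}. t < count_le {1..Suc m} p t)"
proof
  assume "p \<in> PPF (Suc m)"
  then have parking: "parking_on {1..Suc m} p" and no_bp: "\<forall>j<Suc m. \<not> breakpoint (Suc m) p j"
    by (simp_all add: PPF_iff_no_early_breakpoint PF_eq_parking_on)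
  have large: "\<forall>t\<in>{1..m}. t < count_le {1..Suc m} p t"
  proof
    fix t assume t: "t \<in> {1..m}"
    then have "t \<le> count_le {1..Suc m} p t" using parking unfolding parking_on_def by auto
    moreover have "count_le {1..Suc m} p t \<noteq> t" using no_bp t by (auto simp: breakpoint_iff_count_le)
    ultimately show "t < count_le {1..Suc m} p t" by simp
  qed
  have "Suc m \<le> count_le {1..Suc m} p m" using large assms by force
  then have "{j\<in>{1..Suc m}. p j \<le> int m} = {1..Suc m}"
    unfolding count_le_def by (intro card_seteq) auto
  then have "p \<in> {1..Suc m} \<rightarrow>\<^sub>E {1..int m}"
    using parking unfolding parking_on_def by (auto simp: PiE_iff)
  with large show "p \<in> {1..Suc m} \<rightarrow>\<^sub>E {1..int m} \<and> (\<forall>t\<in>{1..m}. t < count_le {1..Suc m} p t)"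
    by blast
next
  assume H: "p \<in> {1..Suc m} \<rightarrow>\<^sub>E {1..int m} \<and> (\<forall>t\<in>{1..m}. t < count_le {1..Suc m} p t)"
  then have "{j\<in>{1..Suc m}. p j \<le> int (Suc m)} = {1..Suc m}" by (auto simp: PiE_iff)
  then have "count_le {1..Suc m} p (Suc m) = Suc m" unfolding count_le_def by simp
  have "i \<le> count_le {1..Suc m} p i" if "i \<in> {1..Suc m}" for i
  proof (cases "i = Suc m")
    case False
    then have "i \<in> {1..m}" using that by auto
    then have "i < count_le {1..Suc m} p i" using H by blast
    then show ?thesis by simp
  qed (use \<open>count_le {1..Suc m} p (Suc m) = Suc m\<close> in simp)
  then have "p \<in> PF (Suc m)"
    using H unfolding PF_eq_parking_on parking_on_def by (auto simp: PiE_iff)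
  moreover have "\<not> breakpoint (Suc m) p j" if "j < Suc m" for j
  proof
    assume "breakpoint (Suc m) p j"
    then have "j \<in> {1..m}" "count_le {1..Suc m} p j = j"
      using that by (auto simp: breakpoint_iff_count_le)
    then show False using H by (metis less_irrefl)
  qed
  ultimately show "p \<in> PPF (Suc m)" by (simp add: PPF_iff_no_early_breakpoint)
qed

lemma cyclic_shift_PPF_not_PPF:
  assumes q: "q \<in> PPF (Suc m)" and "0 < d" "d < m"
  shows "cyclic_shift (Suc m) m d q \<notin> PPF (Suc m)"
proof
  assume shifted: "cyclic_shift (Suc m) m d q \<in> PPF (Suc m)"
  have "1 \<le> m" using assms by simp
  note char = PPF_Suc_iff[OF this]
  have q_vals: "q \<in> {1..Suc m} \<rightarrow>\<^sub>E {1..int m}" using q char by blast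
  then have "{j\<in>{1..Suc m}. q j \<le> int m} = {1..Suc m}" by (auto simp: PiE_iff)
  then have "count_le {1..Suc m} q m = Suc m" unfolding count_le_def by simp
  moreover have "m - d < count_le {1..Suc m} q (m - d)" using q char assms by auto
  moreover have "count_le {1..Suc m} (cyclic_shift (Suc m) m (m - (m - d)) q) d =
      count_le {1..Suc m} q m - count_le {1..Suc m} q (m - d)"
    using count_le_cyclic_shift[OF q_vals, of "m - d" d] assms by simp
  ultimately have "count_le {1..Suc m} (cyclic_shift (Suc m) m d q) d \<le> d"
    using assms by simp
  moreover have "d < count_le {1..Suc m} (cyclic_shift (Suc m) m d q) d"
    using shifted char assms by auto
  ultimately show False by simp
qed

lemma ex_cyclic_shift_PPF:
  assumes "1 \<le> m" and f: "f \<in> {1..Suc m} \<rightarrow>\<^sub>E {1..int m}"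
  shows "\<exists>k<m. cyclic_shift (Suc m) m k f \<in> PPF (Suc m)"
proof -
  let ?count = "count_le {1..Suc m} f"
  define g where "g t = int (?count t) - int t" for t
  \<comment> \<open>Rotating the values so that the last minimum r of g moves to m makes every count exceed t.\<close>
  define r where "r = Max {t\<in>{1..m}. g t = Min (g ` {1..m})}"
  have "{t\<in>{1..m}. g t = Min (g ` {1..m})} \<noteq> {}"
    using assms(1) Min_in[of "g ` {1..m}"] by fastforce
  then have r: "r \<in> {1..m}" "g r = Min (g ` {1..m})"
    using Max_in[of "{t\<in>{1..m}. g t = Min (g ` {1..m})}"] unfolding r_def by auto
  have g_min: "g r \<le> g t" if "t \<in> {1..m}" for t
    using that r(2) by simp
  have g_after: "g r < g t" if "r < t" "t \<le> m" for t
  proof -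
    have t: "t \<in> {1..m}" using that r(1) by auto
    have "g t \<noteq> Min (g ` {1..m})"
    proof
      assume "g t = Min (g ` {1..m})"
      then have "t \<le> r" unfolding r_def using t by (intro Max_ge) auto
      with that show False by simp
    qed
    then show ?thesis using g_min[OF t] r(2) by simp
  qed
  have "t < count_le {1..Suc m} (cyclic_shift (Suc m) m (m - r) f) t" if t: "t \<in> {1..m}" for t
  proof (cases "r + t \<le> m")
    case True
    then have "g r < g (r + t)" using g_after t by simp
    moreover have "?count r \<le> ?count (r + t)" by (simp add: count_le_mono)
    ultimately show ?thesis
      using count_le_cyclic_shift[OF f, of r t] r t True unfolding g_def by simp
  next
    case False
    then have "r + t - m \<in> {1..m}" using r t by auto
    then have "g r \<le> g (r + t - m)" by (rule g_min)
    moreover have "?count r \<le> Suc m" using count_le_le_card[of "{1..Suc m}" f r] by simp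
    ultimately show ?thesis
      using count_le_cyclic_shift[OF f, of r t] r t False unfolding g_def by simp
  qed
  then have "cyclic_shift (Suc m) m (m - r) f \<in> PPF (Suc m)"
    using PPF_Suc_iff[OF assms(1)] cyclic_shift_in_PiE assms(1) by simp
  moreover have "m - r < m" using r by simp
  ultimately show ?thesis by blast
qed

lemma cyclic_shift_PPF_inj:
  assumes "q \<in> PPF (Suc m)" "q' \<in> PPF (Suc m)" "k \<le> k'" "k' < m"
    and eq: "cyclic_shift (Suc m) m k q = cyclic_shift (Suc m) m k' q'"
  shows "q = q' \<and> k = k'"
proof -
  have vals: "q \<in> {1..Suc m} \<rightarrow>\<^sub>E {1..int m}" "q' \<in> {1..Suc m} \<rightarrow>\<^sub>E {1..int m}"
    using assms PPF_Suc_iff[of m] by auto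
  have "q = cyclic_shift (Suc m) m (m - k) (cyclic_shift (Suc m) m k q)"
    using assms(3,4) cyclic_shift_period[OF vals(1)] by (simp add: cyclic_shift_cyclic_shift)
  also have "\<dots> = cyclic_shift (Suc m) m ((k' - k) + m) q'"
    using assms(3,4) by (simp add: eq cyclic_shift_cyclic_shift add.commute)
  also have "\<dots> = cyclic_shift (Suc m) m (k' - k) q'"
    by (metis cyclic_shift_mod mod_add_self2)
  finally have q: "q = cyclic_shift (Suc m) m (k' - k) q'" .
  then have "k' - k = 0"
    using cyclic_shift_PPF_not_PPF[OF assms(2), of "k' - k"] assms by (cases "k' - k = 0") auto
  then show ?thesis using q assms(3) cyclic_shift_0[OF vals(2)] by simp
qed

lemma bij_betw_cyclic_shift_PPF:
  assumes "1 \<le> m"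
  shows "bij_betw (\<lambda>(q, k). cyclic_shift (Suc m) m k q)
    (PPF (Suc m) \<times> {..<m}) ({1..Suc m} \<rightarrow>\<^sub>E {1..int m})"
proof (rule bij_betwI')
  fix x y assume "x \<in> PPF (Suc m) \<times> {..<m}" "y \<in> PPF (Suc m) \<times> {..<m}"
  then obtain q k q' k' where x: "x = (q, k)" "q \<in> PPF (Suc m)" "k < m"
    and y: "y = (q', k')" "q' \<in> PPF (Suc m)" "k' < m" by auto
  have "q = q' \<and> k = k'" if "cyclic_shift (Suc m) m k q = cyclic_shift (Suc m) m k' q'"
  proof (cases "k \<le> k'")
    case True
    then show ?thesis using cyclic_shift_PPF_inj x y that by blast
  next
    case False
    then show ?thesis using cyclic_shift_PPF_inj[of q' m q k' k] x y that by simp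
  qed
  then show "((\<lambda>(q, k). cyclic_shift (Suc m) m k q) x = (\<lambda>(q, k). cyclic_shift (Suc m) m k q) y)
      = (x = y)"
    using x y by auto
next
  fix x assume "x \<in> PPF (Suc m) \<times> {..<m}"
  then show "(\<lambda>(q, k). cyclic_shift (Suc m) m k q) x \<in> {1..Suc m} \<rightarrow>\<^sub>E {1..int m}"
    using cyclic_shift_in_PiE assms by (cases x) simp
next
  fix f assume f: "f \<in> {1..Suc m} \<rightarrow>\<^sub>E {1..int m}"
  then obtain k where k: "k < m" "cyclic_shift (Suc m) m k f \<in> PPF (Suc m)"
    using ex_cyclic_shift_PPF assms by blast
  have "cyclic_shift (Suc m) m ((m - k) mod m) (cyclic_shift (Suc m) m k f) =
      cyclic_shift (Suc m) m (m - k) (cyclic_shift (Suc m) m k f)"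
    by (rule cyclic_shift_mod)
  also have "\<dots> = f"
    using k(1) cyclic_shift_period[OF f] by (simp add: cyclic_shift_cyclic_shift)
  finally have "f = cyclic_shift (Suc m) m ((m - k) mod m) (cyclic_shift (Suc m) m k f)" ..
  moreover have "(m - k) mod m < m" using assms by simp
  ultimately show "\<exists>x\<in>PPF (Suc m) \<times> {..<m}. f = (\<lambda>(q, k). cyclic_shift (Suc m) m k q) x"
    using k(2) by (intro bexI[of _ "(cyclic_shift (Suc m) m k f, (m - k) mod m)"]) auto
qed

lemma card_PPF_Suc:
  assumes "1 \<le> m"
  shows "card (PPF (Suc m)) = m ^ m"
proof -
  have "card (PPF (Suc m)) * m = m ^ Suc m"
    using bij_betw_same_card[OF bij_betw_cyclic_shift_PPF[OF assms]]
    by (simp add: card_cartesian_product card_PiE)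
  then show ?thesis using assms by simp
qed

lemma card_PPF_1: "card (PPF 1) = 1"
proof -
  have "PPF 1 = {\<lambda>j\<in>{1}. 1}"
  proof
    show "PPF 1 \<subseteq> {\<lambda>j\<in>{1}. 1}" unfolding PPF_def PF_def by (auto simp: PiE_iff)
    show "{\<lambda>j\<in>{1}. 1} \<subseteq> PPF 1" unfolding PPF_def PF_def breakpoint_def by (simp add: PiE_iff)
  qed
  then show ?thesis by simp
qed

lemma card_PPF: "1 \<le> n \<Longrightarrow> card (PPF n) = (n - 1) ^ (n - 1)"
  using card_PPF_1 card_PPF_Suc[of "n - 1"] by (cases "n = 1") auto

theorem proposition3p4:
  fixes n :: nat
  assumes "n \<ge> 1"
  shows "PPF n = PPF_G {0..n} K_mult 0
       \<and> card (PPF_G {0..n} K_mult 0) = (n - 1) ^ (n - 1)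
       \<and> card (SR {0..n} K_mult 0) = (n - 1) ^ (n - 1)"
  using PPF_eq_PPF_G[of n] card_PPF[OF assms] card_SR_K_mult[OF assms] by simp

end
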